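(* Let $\mathfrak d=\mathfrak n^-\oplus\mathfrak k\oplus\mathfrak h\oplus\mathfrak n^+$ be the Lie algebra described in the context. Define a bilinear form $(\cdot|\cdot)_{\mathfrak d}$ on $\mathfrak d$ by: for $h,h',h_\lambda\in\mathfrak h$, $x,x'\in\mathfrak n^+\oplus\mathfrak n^-$, $k,k',k_\mu\in\mathfrak k$, $(h|h')_{\mathfrak d}=2(h|h')$, $(h|x)_{\mathfrak d}=(x|h)_{\mathfrak d}=0$, $(x|x')_{\mathfrak d}=(x|x')$, $(h_\lambda|k_\mu)_{\mathfrak d}=-2u(\lambda,\mu)$, $(k_\mu|h_\lambda)_{\mathfrak d}=2u(\mu,\lambda)$, $(k|x)_{\mathfrak d}=(x|k)_{\mathfrak d}=0$, $(k|k')_{\mathfrak d}=2(\varphi^{-1}(k)|\varphi^{-1}(k'))$, where $(\cdot|\cdot)$ is the invariant form on $\mathfrak g$. Then $(\cdot|\cdot)_{\mathfrak d}$ is a symmetric bilinear form on $\mathfrak d$ which is $\mathfrak d$-invariant, i.e. $([a,b]|c)_{\mathfrak d}=(a|[b,c])_{\mathfrak d}$ for all $a,b,c\in\mathfrak d$.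
   Context: Let $C=(a_{ij})_{n\times n}$ be an indecomposable symmetrizable generalized Cartan matrix of finite type, and $D=\mathrm{diag}(d_1,\dots,d_n)$ with positive integers $d_i$ such that $DC$ is symmetric positive definite. Let $\mathfrak g$ be the finite dimensional simple complex Lie algebra (bracket $[\cdot,\cdot]_{\mathfrak g}$) associated to $C$, $\mathfrak h$ a Cartan subalgebra with simple roots $\alpha_1,\dots,\alpha_n$, and $h_i\in\mathfrak h$ with $\alpha_j(h_i)=a_{ij}$; $\mathfrak g$ is generated by $h_i,x_{\pm\alpha_i}$ with $[h_i,x_{\pm\alpha_j}]_{\mathfrak g}=\pm a_{ij}x_{\pm\alpha_j}$, $[x_{\alpha_i},x_{-\alpha_j}]_{\mathfrak g}=\delta_{ij}h_i$ and the Serre relations. Let $\mathfrak n^+$ (resp. $\mathfrak n^-$) be the span of root vectors with positive (resp. negative) roots, $\mathfrak n=\mathfrak n^-\oplus\mathfrak n^+$; $x_\alpha$ always denotes a root vector of root $\alpha$. Let $(\cdot|\cdot)$ be the symmetric bilinear form on $\mathfrak h^*$ with $(\alpha_i|\alpha_j)=d_ia_{ij}$; for $\lambda\in\mathfrak h^*$ let $h_\lambda\in\mathfrak h$ be defined by $\alpha_i(h_\lambda)=(\alpha_i|\lambda)$ for all $i$. This gives a form on $\mathfrak h$, $(h_\lambda|h_\mu)=(\lambda|\mu)=\lambda(h_\mu)$, extended to the nondegenerate $\mathfrak g$-invariant symmetric form $(\cdot|\cdot)$ on $\mathfrak g$ with $(h_i|h_j)=d_j^{-1}a_{ij}$, $(h|x_\alpha)=0$,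 $(x_\alpha|x_\beta)=0$ if $\alpha+\beta\neq0$, $(x_{\alpha_i}|x_{-\alpha_j})=d_i^{-1}\delta_{ij}$. Let $u=(u_{ij})$ be a skew symmetric complex $n\times n$ matrix, giving $u(\lambda,\mu)=\sum_{i,j}u_{ij}\lambda(h_i)\mu(h_j)$ on $\mathfrak h^*$; let $\Phi:\mathfrak h^*\to\mathfrak h^*$ be the linear map with $u(\lambda,\mu)=(\Phi\lambda|\mu)$, and $\Phi_\pm=\Phi\pm I$. Let $\mathfrak k$ be a vector space with a linear isomorphism $\varphi:\mathfrak h\to\mathfrak k$, and $k_\lambda=\varphi(h_\lambda)$. Let $\mathfrak g'=\mathfrak n^-\oplus\mathfrak k\oplus\mathfrak n^+$ be the Lie algebra (isomorphic to $\mathfrak g$) with bracket $[k_\lambda,k_\mu]_{\mathfrak g'}=0$, $[k_\lambda,x_\alpha]_{\mathfrak g'}=(\alpha|\lambda)x_\alpha$, $[x_\alpha,x_\beta]_{\mathfrak g'}=[x_\alpha,x_\beta]_{\mathfrak g}$ for $\alpha\neq-\beta$, $[x_\alpha,x_{-\alpha}]_{\mathfrak g'}=\varphi([x_\alpha,x_{-\alpha}]_{\mathfrak g})$. Then $\mathfrak d=\mathfrak n^-\oplus\mathfrak k\oplus\mathfrak h\oplus\mathfrak n^+$ is the Lie algebra with bracket: $[h_\lambda,h_\mu]=[h_\lambda,k_\mu]=[k_\lambda,k_\mu]=0$, $[h_\lambda,x_\alpha]=-(\Phi_-\lambda|\alpha)x_\alpha$, $[k_\lambda,x_\alpha]=(\Phi_+\lambda|\alpha)x_\alpha$,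 $[x_\alpha,x_\beta]=\tfrac12([x_\alpha,x_\beta]_{\mathfrak g}+[x_\alpha,x_\beta]_{\mathfrak g'})$ for all $\lambda,\mu\in\mathfrak h^*$ and root vectors $x_\alpha,x_\beta\in\mathfrak n$. *)

theory Defs
  imports "HOL-Analysis.Analysis"
begin

text \<open>Indices run over 0..n-1. A is the generalized Cartan matrix C, d the symmetrizer D.\<close>

definition indecomposable :: "nat \<Rightarrow> (nat \<Rightarrow> nat \<Rightarrow> int) \<Rightarrow> bool" where
  "indecomposable n A \<longleftrightarrow> 0 < n \<and>
     \<not> (\<exists>I. I \<subseteq> {..<n} \<and> I \<noteq> {} \<and> I \<noteq> {..<n} \<and> (\<forall>i\<in>I. \<forall>j\<in>{..<n} - I. A i j = 0))"

definition gcm :: "nat \<Rightarrow> (nat \<Rightarrow> nat \<Rightarrow> int) \<Rightarrow> bool" where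
  "gcm n A \<longleftrightarrow> (\<forall>i<n. A i i = 2) \<and> (\<forall>i<n. \<forall>j<n. i \<noteq> j \<longrightarrow> A i j \<le> 0)
     \<and> (\<forall>i<n. \<forall>j<n. A i j = 0 \<longleftrightarrow> A j i = 0)"

text \<open>D = diag(d) with positive integer entries, DC symmetric positive definite
  (this makes C symmetrizable of finite type).\<close>
definition symmetrizer_pd :: "nat \<Rightarrow> (nat \<Rightarrow> nat \<Rightarrow> int) \<Rightarrow> (nat \<Rightarrow> nat) \<Rightarrow> bool" where
  "symmetrizer_pd n A d \<longleftrightarrow> (\<forall>i<n. 0 < d i)
     \<and> (\<forall>i<n. \<forall>j<n. int (d i) * A i j = int (d j) * A j i)
     \<and> (\<forall>v :: nat \<Rightarrow> real. (\<exists>i<n. v i \<noteq> 0) \<longrightarrow>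
          0 < (\<Sum>i<n. \<Sum>j<n. v i * real (d i) * real_of_int (A i j) * v j))"

definition lie_algebra :: "(complex \<Rightarrow> 'g \<Rightarrow> 'g::ab_group_add) \<Rightarrow> ('g \<Rightarrow> 'g \<Rightarrow> 'g) \<Rightarrow> bool" where
  "lie_algebra sc br \<longleftrightarrow> vector_space sc
     \<and> (\<forall>x y z. br (x + y) z = br x z + br y z \<and> br z (x + y) = br z x + br z y)
     \<and> (\<forall>c x z. br (sc c x) z = sc c (br x z) \<and> br z (sc c x) = sc c (br z x))
     \<and> (\<forall>x. br x x = 0)
     \<and> (\<forall>x y z. br x (br y z) + br y (br z x) + br z (br x y) = 0)"

definition lie_generated :: "(complex \<Rightarrow> 'g \<Rightarrow> 'g::ab_group_add) \<Rightarrow> ('g \<Rightarrow> 'g \<Rightarrow> 'g) \<Rightarrow> 'g set \<Rightarrow> 'g set" where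
  "lie_generated sc br S =
     \<Inter>{V. module.subspace sc V \<and> S \<subseteq> V \<and> (\<forall>x\<in>V. \<forall>y\<in>V. br x y \<in> V)}"

text \<open>g is the finite dimensional simple Lie algebra associated to C: it is generated by
  h_i (hh i), x_{alpha_i} (ep i), x_{-alpha_i} (em i) subject to the Chevalley-Serre relations,
  with the h_i linearly independent (so g is the Serre algebra, not a proper quotient).\<close>
definition chevalley_serre ::
  "nat \<Rightarrow> (nat \<Rightarrow> nat \<Rightarrow> int) \<Rightarrow> (complex \<Rightarrow> 'g \<Rightarrow> 'g::ab_group_add) \<Rightarrow> ('g \<Rightarrow> 'g \<Rightarrow> 'g)
    \<Rightarrow> (nat \<Rightarrow> 'g) \<Rightarrow> (nat \<Rightarrow> 'g) \<Rightarrow> (nat \<Rightarrow> 'g) \<Rightarrow> bool" where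
  "chevalley_serre n A sc br hh ep em \<longleftrightarrow>
     (\<forall>i<n. \<forall>j<n. br (hh i) (hh j) = 0
        \<and> br (hh i) (ep j) = sc (of_int (A i j)) (ep j)
        \<and> br (hh i) (em j) = sc (- of_int (A i j)) (em j)
        \<and> br (ep i) (em j) = (if i = j then hh i else 0)
        \<and> (i \<noteq> j \<longrightarrow> (br (ep i) ^^ nat (1 - A i j)) (ep j) = 0
                   \<and> (br (em i) ^^ nat (1 - A i j)) (em j) = 0))
     \<and> lie_generated sc br (hh ` {..<n} \<union> ep ` {..<n} \<union> em ` {..<n}) = UNIV
     \<and> inj_on hh {..<n} \<and> \<not> module.dependent sc (hh ` {..<n})"

definition cartan :: "nat \<Rightarrow> (complex \<Rightarrow> 'g \<Rightarrow> 'g::ab_group_add) \<Rightarrow> (nat \<Rightarrow> 'g) \<Rightarrow> 'g set" where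
  "cartan n sc hh = module.span sc (hh ` {..<n})"

text \<open>A root alpha is given as a function on g, only its values on the Cartan subalgebra matter.\<close>
definition rootspace ::
  "nat \<Rightarrow> (complex \<Rightarrow> 'g \<Rightarrow> 'g::ab_group_add) \<Rightarrow> ('g \<Rightarrow> 'g \<Rightarrow> 'g) \<Rightarrow> (nat \<Rightarrow> 'g) \<Rightarrow> ('g \<Rightarrow> complex) \<Rightarrow> 'g set" where
  "rootspace n sc br hh \<alpha> = {x. \<forall>h\<in>cartan n sc hh. br h x = sc (\<alpha> h) x}"

definition is_root ::
  "nat \<Rightarrow> (complex \<Rightarrow> 'g \<Rightarrow> 'g::ab_group_add) \<Rightarrow> ('g \<Rightarrow> 'g \<Rightarrow> 'g) \<Rightarrow> (nat \<Rightarrow> 'g) \<Rightarrow> ('g \<Rightarrow> complex) \<Rightarrow> bool" where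
  "is_root n sc br hh \<alpha> \<longleftrightarrow> (\<exists>h\<in>cartan n sc hh. \<alpha> h \<noteq> 0) \<and> (\<exists>x\<in>rootspace n sc br hh \<alpha>. x \<noteq> 0)"

text \<open>n = n^- + n^+ : span of all root spaces.\<close>
definition nilp :: "nat \<Rightarrow> (complex \<Rightarrow> 'g \<Rightarrow> 'g::ab_group_add) \<Rightarrow> ('g \<Rightarrow> 'g \<Rightarrow> 'g) \<Rightarrow> (nat \<Rightarrow> 'g) \<Rightarrow> 'g set" where
  "nilp n sc br hh = module.span sc (\<Union>{rootspace n sc br hh \<alpha> | \<alpha>. is_root n sc br hh \<alpha>})"

definition invariant_form ::
  "nat \<Rightarrow> (nat \<Rightarrow> nat \<Rightarrow> int) \<Rightarrow> (nat \<Rightarrow> nat) \<Rightarrow> (complex \<Rightarrow> 'g \<Rightarrow> 'g::ab_group_add) \<Rightarrow> ('g \<Rightarrow> 'g \<Rightarrow> 'g)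
    \<Rightarrow> (nat \<Rightarrow> 'g) \<Rightarrow> (nat \<Rightarrow> 'g) \<Rightarrow> (nat \<Rightarrow> 'g) \<Rightarrow> ('g \<Rightarrow> 'g \<Rightarrow> complex) \<Rightarrow> bool" where
  "invariant_form n A d sc br hh ep em B \<longleftrightarrow>
     (\<forall>x y z. B (x + y) z = B x z + B y z) \<and> (\<forall>c x z. B (sc c x) z = c * B x z)
     \<and> (\<forall>x y. B x y = B y x)
     \<and> (\<forall>x y z. B (br x y) z = B x (br y z))
     \<and> (\<forall>x. (\<forall>y. B x y = 0) \<longrightarrow> x = 0)
     \<and> (\<forall>i<n. \<forall>j<n. B (hh i) (hh j) = of_int (A i j) / of_nat (d j))
     \<and> (\<forall>i<n. \<forall>j<n. B (ep i) (em j) = (if i = j then 1 / of_nat (d i) else 0))"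

text \<open>For H = h_lambda in the Cartan subalgebra, lambda(h_i) = (h_lambda | h_i) = B H (hh i).
  uu H H' = u(lambda,mu) for H = h_lambda, H' = h_mu.\<close>
definition uu :: "nat \<Rightarrow> (nat \<Rightarrow> nat \<Rightarrow> complex) \<Rightarrow> ('g \<Rightarrow> 'g \<Rightarrow> complex) \<Rightarrow> (nat \<Rightarrow> 'g) \<Rightarrow> 'g \<Rightarrow> 'g \<Rightarrow> complex" where
  "uu n u B hh H H' = (\<Sum>i<n. \<Sum>j<n. u i j * B H (hh i) * B H' (hh j))"

text \<open>PhiH n u sc B hh (h_lambda) = h_{Phi lambda}: the element of the Cartan subalgebra with
  (h_{Phi lambda} | h_mu) = u(lambda, mu) for all mu.\<close>
definition PhiH :: "nat \<Rightarrow> (nat \<Rightarrow> nat \<Rightarrow> complex) \<Rightarrow> (complex \<Rightarrow> 'g \<Rightarrow> 'g::ab_group_add)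
    \<Rightarrow> ('g \<Rightarrow> 'g \<Rightarrow> complex) \<Rightarrow> (nat \<Rightarrow> 'g) \<Rightarrow> 'g \<Rightarrow> 'g" where
  "PhiH n u sc B hh H = (\<Sum>i<n. \<Sum>j<n. sc (u i j * B H (hh i)) (hh j))"

text \<open>An element of d is represented as a pair (X, K) with X in g = n^- + h + n^+ and K in h,
  standing for X + phi(K); thus k_lambda = phi(h_lambda) is (0, h_lambda).\<close>

definition dset :: "nat \<Rightarrow> (complex \<Rightarrow> 'g \<Rightarrow> 'g::ab_group_add) \<Rightarrow> (nat \<Rightarrow> 'g) \<Rightarrow> ('g \<times> 'g) set" where
  "dset n sc hh = {p. snd p \<in> cartan n sc hh}"

definition scd :: "(complex \<Rightarrow> 'g \<Rightarrow> 'g) \<Rightarrow> complex \<Rightarrow> 'g \<times> 'g \<Rightarrow> 'g \<times> 'g" where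
  "scd sc c p = (sc c (fst p), sc c (snd p))"

definition bilinear_map_on ::
  "(complex \<Rightarrow> 'g \<Rightarrow> 'g::ab_group_add) \<Rightarrow> ('g \<times> 'g) set \<Rightarrow> ('g \<times> 'g \<Rightarrow> 'g \<times> 'g \<Rightarrow> 'g \<times> 'g) \<Rightarrow> bool" where
  "bilinear_map_on sc D f \<longleftrightarrow>
     (\<forall>a\<in>D. \<forall>b\<in>D. f a b \<in> D)
     \<and> (\<forall>a\<in>D. \<forall>b\<in>D. \<forall>b'\<in>D. f (b + b') a = f b a + f b' a \<and> f a (b + b') = f a b + f a b')
     \<and> (\<forall>a\<in>D. \<forall>b\<in>D. \<forall>c. f (scd sc c b) a = scd sc c (f b a) \<and> f a (scd sc c b) = scd sc c (f a b))"

definition bilinear_form_on ::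
  "(complex \<Rightarrow> 'g \<Rightarrow> 'g::ab_group_add) \<Rightarrow> ('g \<times> 'g) set \<Rightarrow> ('g \<times> 'g \<Rightarrow> 'g \<times> 'g \<Rightarrow> complex) \<Rightarrow> bool" where
  "bilinear_form_on sc D f \<longleftrightarrow>
     (\<forall>a\<in>D. \<forall>b\<in>D. \<forall>b'\<in>D. f (b + b') a = f b a + f b' a \<and> f a (b + b') = f a b + f a b')
     \<and> (\<forall>a\<in>D. \<forall>b\<in>D. \<forall>c. f (scd sc c b) a = c * f b a \<and> f a (scd sc c b) = c * f a b)"

end

theory Submission
  imports Defs
begin

text \<open>The bracket and the form on \<open>d\<close> are additive in each argument, and \<open>d\<close> is additively
  generated by \<open>h\<close>, \<open>k\<close> and the root vectors: the root spaces span \<open>g\<close> because, by the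
  definition of the bracket on \<open>d\<close>, opposite root spaces bracket into \<open>h\<close>, and root vectors
  are closed under scalar multiples. Hence symmetry and invariance need only be checked on
  generators. There the elements of \<open>h\<close> and \<open>k\<close> behave alike: each acts on a root space by a
  scalar, is orthogonal to \<open>n\<close>, and pairs with \<open>h + \<phi>(h)\<close> through a linear functional. The
  only identity with content is invariance for opposite root vectors \<open>x, y\<close>, whose bracket
  \<open>([x,y] + \<phi>[x,y]) / 2\<close> reduces it to the invariance of the form on \<open>g\<close> and the skew
  symmetry of \<open>u\<close>.\<close>

inductive_set sums_of :: "'a::monoid_add set \<Rightarrow> 'a set" for T where
  zero: "0 \<in> sums_of T"
| gen: "t \<in> T \<Longrightarrow> t \<in> sums_of T"
| add: "a \<in> sums_of T \<Longrightarrow> b \<in> sums_of T \<Longrightarrow> a + b \<in> sums_of T"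

lemma additive_eq_on_sums_of:
  fixes F G :: "'a::monoid_add \<Rightarrow> 'b::ab_group_add"
  assumes F: "\<And>a b. a \<in> sums_of T \<Longrightarrow> b \<in> sums_of T \<Longrightarrow> F (a + b) = F a + F b"
    and G: "\<And>a b. a \<in> sums_of T \<Longrightarrow> b \<in> sums_of T \<Longrightarrow> G (a + b) = G a + G b"
    and FG: "\<And>t. t \<in> T \<Longrightarrow> F t = G t"
    and a: "a \<in> sums_of T"
  shows "F a = G a"
  using a
proof (induction rule: sums_of.induct)
  case zero
  have "F 0 = 0" using F[OF sums_of.zero sums_of.zero] by simp
  moreover have "G 0 = 0" using G[OF sums_of.zero sums_of.zero] by simp
  ultimately show ?case by simp
next
  case (gen t)
  then show ?case by (rule FG)
next
  case (add a b)
  then show ?case using F G by simp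
qed

locale complex_lie_algebra =
  fixes sc :: "complex \<Rightarrow> 'g \<Rightarrow> 'g::ab_group_add" and br :: "'g \<Rightarrow> 'g \<Rightarrow> 'g"
  assumes lie_algebra: "lie_algebra sc br"
begin

sublocale vs: vector_space sc
  using lie_algebra unfolding lie_algebra_def by auto

lemma br_add_left: "br (x + y) z = br x z + br y z"
  and br_add_right: "br z (x + y) = br z x + br z y"
  and br_scale_left: "br (sc c x) z = sc c (br x z)"
  and br_scale_right: "br z (sc c x) = sc c (br z x)"
  and br_self: "br x x = 0"
  and jacobi: "br x (br y w) + br y (br w x) + br w (br x y) = 0"
  using lie_algebra unfolding lie_algebra_def by auto

lemma br_zero_left [simp]: "br 0 y = 0"
  using br_add_left[of 0 0 y] by simp

lemma br_zero_right [simp]: "br y 0 = 0"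
  using br_add_right[of y 0 0] by simp

lemma br_anticomm: "br y x = - br x y"
proof -
  have "br x x + br x y + (br y x + br y y) = 0"
    using br_self[of "x + y"] by (simp add: br_add_left br_add_right add_ac)
  then show ?thesis by (simp add: br_self eq_neg_iff_add_eq_0 add.commute)
qed

lemma br_minus_right: "br x (- y) = - br x y"
  using br_add_right[of x y "- y"] by (simp add: eq_neg_iff_add_eq_0 add.commute)

lemma br_span_subspace:
  assumes V: "vs.subspace V" and XY: "\<And>x y. x \<in> X \<Longrightarrow> y \<in> Y \<Longrightarrow> br x y \<in> V"
    and x: "x \<in> vs.span X" and y: "y \<in> vs.span Y"
  shows "br x y \<in> V"
  using x
proof (induction rule: vs.span_induct_alt)
  case base
  then show ?case using V by (simp add: vs.subspace_0)
next
  case (step c x1 x2)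
  have "br x1 y \<in> V" using y
  proof (induction rule: vs.span_induct_alt)
    case base
    then show ?case using V by (simp add: vs.subspace_0)
  next
    case (step c' y1 y2)
    then show ?case using V XY[of x1 y1] \<open>x1 \<in> X\<close>
      by (simp add: br_add_right br_scale_right vs.subspace_add vs.subspace_scale)
  qed
  then show ?case
    using step V by (simp add: br_add_left br_scale_left vs.subspace_add vs.subspace_scale)
qed

lemma scale_half_double: "sc (1/2) (z + z) = z"
  using vs.scale_left_distrib[of "1/2" "1/2" z] by (simp add: vs.scale_right_distrib)

lemma rootspace_scale: "x \<in> rootspace n sc br hh \<alpha> \<Longrightarrow> sc c x \<in> rootspace n sc br hh \<alpha>"
  unfolding rootspace_def by (auto simp: br_scale_right vs.scale_left_commute)

lemma rootspace_bracket:
  assumes x: "x \<in> rootspace n sc br hh \<alpha>" and y: "y \<in> rootspace n sc br hh \<beta>"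
  shows "br x y \<in> rootspace n sc br hh (\<lambda>h. \<alpha> h + \<beta> h)"
  unfolding rootspace_def
proof safe
  fix h assume h: "h \<in> cartan n sc hh"
  have hx: "br h x = sc (\<alpha> h) x" and hy: "br h y = sc (\<beta> h) y"
    using x y h unfolding rootspace_def by auto
  have "br h (br x y) + br x (br y h) + br y (br h x) = 0" by (rule jacobi)
  moreover have "br x (br y h) = - sc (\<beta> h) (br x y)"
    using hy br_anticomm[of y h] by (simp add: br_scale_right br_minus_right)
  moreover have "br y (br h x) = - sc (\<alpha> h) (br x y)"
    using hx br_anticomm[of x y] by (simp add: br_scale_right)
  ultimately have "br h (br x y) = sc (\<beta> h) (br x y) + sc (\<alpha> h) (br x y)"
    by (simp add: eq_neg_iff_add_eq_0 algebra_simps)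
  then show "br h (br x y) = sc (\<alpha> h + \<beta> h) (br x y)"
    by (simp add: vs.scale_left_distrib add.commute)
qed

end

locale chevalley_setting = complex_lie_algebra sc br
  for sc :: "complex \<Rightarrow> 'g \<Rightarrow> 'g::ab_group_add" and br +
  fixes n :: nat and A :: "nat \<Rightarrow> nat \<Rightarrow> int" and d :: "nat \<Rightarrow> nat"
    and hh ep em :: "nat \<Rightarrow> 'g" and B :: "'g \<Rightarrow> 'g \<Rightarrow> complex"
  assumes gcm: "gcm n A" and symmetrizer: "symmetrizer_pd n A d"
    and chevalley_serre: "chevalley_serre n A sc br hh ep em"
    and invariant_form: "invariant_form n A d sc br hh ep em B"
begin

abbreviation "Hc \<equiv> cartan n sc hh"
abbreviation "rs \<equiv> rootspace n sc br hh"
abbreviation "isr \<equiv> is_root n sc br hh"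
abbreviation "NN \<equiv> nilp n sc br hh"

definition root_vectors :: "'g set" where
  "root_vectors = \<Union>{rs \<alpha> | \<alpha>. isr \<alpha>}"

lemma B_add_left: "B (x + y) z = B x z + B y z"
  and B_scale_left: "B (sc c x) z = c * B x z"
  and B_sym: "B x y = B y x"
  and B_invariant: "B (br x y) z = B x (br y z)"
  and B_hh: "i < n \<Longrightarrow> j < n \<Longrightarrow> B (hh i) (hh j) = of_int (A i j) / of_nat (d j)"
  using invariant_form unfolding invariant_form_def by auto

lemma B_add_right: "B z (x + y) = B z x + B z y"
  using B_add_left B_sym by metis

lemma B_scale_right: "B z (sc c x) = c * B z x"
  using B_scale_left B_sym by metis

lemma B_zero_left [simp]: "B 0 y = 0"
  using B_add_left[of 0 0 y] by simp

lemma B_zero_right [simp]: "B y 0 = 0"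
  using B_add_right[of y 0 0] by simp

lemma B_minus_left: "B (- x) y = - B x y"
  using B_add_left[of x "- x" y] by (simp add: eq_neg_iff_add_eq_0 add.commute)

lemma B_minus_right: "B x (- y) = - B x y"
  using B_add_right[of x y "- y"] by (simp add: eq_neg_iff_add_eq_0 add.commute)

lemma B_sum_right: "B z (sum f I) = (\<Sum>i\<in>I. B z (f i))"
  by (induction I rule: infinite_finite_induct) (auto simp: B_add_right)

lemma hh_in_cartan: "i < n \<Longrightarrow> hh i \<in> Hc"
  unfolding cartan_def by (auto intro: vs.span_base)

lemma cartan_add: "x \<in> Hc \<Longrightarrow> y \<in> Hc \<Longrightarrow> x + y \<in> Hc"
  unfolding cartan_def by (rule vs.span_add)

lemma cartan_scale: "x \<in> Hc \<Longrightarrow> sc c x \<in> Hc"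
  unfolding cartan_def by (rule vs.span_scale)

lemma cartan_zero: "0 \<in> Hc"
  unfolding cartan_def by (rule vs.span_zero)

lemma cartan_abelian: "h \<in> Hc \<Longrightarrow> h' \<in> Hc \<Longrightarrow> br h h' = 0"
  using br_span_subspace[of "{0}" "hh ` {..<n}" "hh ` {..<n}" h h'] chevalley_serre
  unfolding cartan_def chevalley_serre_def by auto

lemma rootspace_in_nilp:
  assumes x: "x \<in> rs \<alpha>" and h: "h \<in> Hc" "\<alpha> h \<noteq> 0"
  shows "x \<in> NN"
proof (cases "x = 0")
  case True
  then show ?thesis unfolding nilp_def by (simp add: vs.span_zero)
next
  case False
  then have "isr \<alpha>" using x h unfolding is_root_def by auto
  then show ?thesis using x unfolding nilp_def by (auto intro!: vs.span_base)
qed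

lemma root_vector_in_nilp: "isr \<alpha> \<Longrightarrow> x \<in> rs \<alpha> \<Longrightarrow> x \<in> NN"
  unfolding nilp_def by (auto intro!: vs.span_base)

lemma rootspace_in_span:
  assumes x: "x \<in> rs \<alpha>" and h: "h \<in> Hc" "\<alpha> h \<noteq> 0"
  shows "x \<in> vs.span (Hc \<union> root_vectors)"
proof (cases "x = 0")
  case True
  then show ?thesis by (simp add: vs.span_zero)
next
  case False
  then have "isr \<alpha>" using x h unfolding is_root_def by auto
  then show ?thesis using x unfolding root_vectors_def by (auto intro!: vs.span_base)
qed

lemma B_rootspaces_orthogonal:
  assumes x: "x \<in> rs \<alpha>" and y: "y \<in> rs \<beta>" and h: "h \<in> Hc" "\<alpha> h + \<beta> h \<noteq> 0"
  shows "B x y = 0"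
proof -
  have hx: "br h x = sc (\<alpha> h) x" and hy: "br h y = sc (\<beta> h) y"
    using x y h unfolding rootspace_def by auto
  have "\<alpha> h * B x y = B (br h x) y" using hx by (simp add: B_scale_left)
  also have "\<dots> = - B (br x h) y"
    using br_anticomm[of h x] B_minus_left by simp
  also have "\<dots> = - (\<beta> h * B x y)" using hy by (simp add: B_invariant B_scale_right)
  finally have "(\<alpha> h + \<beta> h) * B x y = 0" by (simp add: algebra_simps)
  then show ?thesis using h by simp
qed

lemma B_cartan_root_vector:
  assumes h: "h \<in> Hc" and w: "isr \<gamma>" "w \<in> rs \<gamma>"
  shows "B h w = 0"
proof -
  obtain h' where h': "h' \<in> Hc" "\<gamma> h' \<noteq> 0" using w unfolding is_root_def by auto
  have "br h' w = sc (\<gamma> h') w" using w h' unfolding rootspace_def by auto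
  then have "\<gamma> h' * B h w = B h (br h' w)" by (simp add: B_scale_right)
  also have "\<dots> = 0" using cartan_abelian[OF h h'(1)] by (simp flip: B_invariant)
  finally show ?thesis using h' by simp
qed

lemma B_bracket_cartan:
  assumes y: "y \<in> rs \<beta>" and h: "h \<in> Hc"
  shows "B (br x y) h = - \<beta> h * B x y"
proof -
  have "br h y = sc (\<beta> h) y" using y h unfolding rootspace_def by auto
  then have "br y h = - sc (\<beta> h) y" using br_anticomm[of h y] by (metis minus_minus)
  then show ?thesis by (simp add: B_invariant B_minus_right B_scale_right)
qed

text \<open>The generators \<open>x\<^sub>\<alpha>\<^sub>i\<close>, \<open>x\<^sub>-\<^sub>\<alpha>\<^sub>i\<close> lie in the root spaces of \<open>\<plusminus>\<alpha>\<^sub>i = \<plusminus>d\<^sub>i (\<cdot> | h\<^sub>i)\<close>,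
  which are roots because \<open>a\<^sub>i\<^sub>i = 2\<close>.\<close>

lemma generator_in_rootspace:
  assumes e: "\<And>j. j < n \<Longrightarrow> br (hh j) e = sc (k * of_int (A j i)) e" and i: "i < n"
  shows "e \<in> rs (\<lambda>h. k * of_nat (d i) * B h (hh i))"
proof -
  have di: "d i > 0" using symmetrizer i unfolding symmetrizer_pd_def by auto
  let ?P = "{h. br h e = sc (k * of_nat (d i) * B h (hh i)) e}"
  have "vs.subspace ?P"
    by (rule vs.subspaceI)
      (auto simp: br_add_left br_scale_left B_add_left B_scale_left vs.scale_left_distrib algebra_simps)
  moreover have "hh ` {..<n} \<subseteq> ?P"
    using e B_hh i di by auto
  ultimately have "Hc \<subseteq> ?P" unfolding cartan_def by (rule vs.span_minimal[rotated])
  then show ?thesis unfolding rootspace_def by auto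
qed

lemma generator_root_nonzero:
  assumes i: "i < n" and k: "k \<noteq> 0"
  shows "k * of_nat (d i) * B (hh i) (hh i) \<noteq> 0"
proof -
  have "d i > 0" using symmetrizer i unfolding symmetrizer_pd_def by auto
  moreover have "A i i = 2" using gcm i unfolding gcm_def by auto
  ultimately show ?thesis using B_hh i k by auto
qed

lemma generator_in_span:
  assumes e: "\<And>j. j < n \<Longrightarrow> br (hh j) e = sc (k * of_int (A j i)) e" and i: "i < n" and k: "k \<noteq> 0"
  shows "e \<in> vs.span (Hc \<union> root_vectors)"
  using rootspace_in_span[OF generator_in_rootspace[OF e i] hh_in_cartan[OF i]
      generator_root_nonzero[OF i k]] .

lemma generators_in_span:
  assumes i: "i < n"
  shows "ep i \<in> vs.span (Hc \<union> root_vectors)" and "em i \<in> vs.span (Hc \<union> root_vectors)"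
proof -
  have "br (hh j) (ep i) = sc (1 * of_int (A j i)) (ep i)"
    and "br (hh j) (em i) = sc (- 1 * of_int (A j i)) (em i)" if "j < n" for j
    using chevalley_serre i that unfolding chevalley_serre_def by auto
  then show "ep i \<in> vs.span (Hc \<union> root_vectors)" "em i \<in> vs.span (Hc \<union> root_vectors)"
    using generator_in_span[OF _ i, of _ 1] generator_in_span[OF _ i, of _ "- 1"] by simp_all
qed

lemma cartan_root_vectors_scale: "x \<in> Hc \<union> root_vectors \<Longrightarrow> sc c x \<in> Hc \<union> root_vectors"
  unfolding root_vectors_def using cartan_scale rootspace_scale[of _ n hh] by blast

text \<open>The span of \<open>h\<close> and the root spaces is then a subalgebra containing the Chevalley
  generators.\<close>

lemma span_cartan_root_vectors:
  assumes opposite: "\<And>\<alpha> \<beta> x y. isr \<alpha> \<Longrightarrow> x \<in> rs \<alpha> \<Longrightarrow> isr \<beta> \<Longrightarrow> y \<in> rs \<beta> \<Longrightarrow>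
      \<forall>h\<in>Hc. \<alpha> h + \<beta> h = 0 \<Longrightarrow> br x y \<in> Hc"
  shows "vs.span (Hc \<union> root_vectors) = UNIV"
proof -
  let ?S = "vs.span (Hc \<union> root_vectors)"
  have cartan_root: "br h z \<in> ?S" if h: "h \<in> Hc" and z: "z \<in> root_vectors" for h z
  proof -
    obtain \<gamma> where "isr \<gamma>" "z \<in> rs \<gamma>" using z unfolding root_vectors_def by auto
    then have "br h z = sc (\<gamma> h) z" using h unfolding rootspace_def by auto
    then show ?thesis using cartan_root_vectors_scale z by (simp add: vs.span_base)
  qed
  have root_root: "br x y \<in> ?S" if x: "x \<in> root_vectors" and y: "y \<in> root_vectors" for x y
  proof -
    obtain \<alpha> \<beta> where ab: "isr \<alpha>" "x \<in> rs \<alpha>" "isr \<beta>" "y \<in> rs \<beta>"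
      using x y unfolding root_vectors_def by auto
    show ?thesis
    proof (cases "\<forall>h\<in>Hc. \<alpha> h + \<beta> h = 0")
      case True
      then show ?thesis using opposite[OF ab] by (simp add: vs.span_base)
    next
      case False
      then obtain h where "h \<in> Hc" "\<alpha> h + \<beta> h \<noteq> 0" by auto
      then show ?thesis using rootspace_in_span[OF rootspace_bracket[OF ab(2) ab(4)]] by auto
    qed
  qed
  have "br x y \<in> ?S" if "x \<in> Hc \<union> root_vectors" "y \<in> Hc \<union> root_vectors" for x y
    using that cartan_abelian cartan_root root_root br_anticomm[of x y] vs.span_neg vs.span_zero
    by (metis Un_iff)
  then have "br x y \<in> ?S" if "x \<in> ?S" "y \<in> ?S" for x y
    using br_span_subspace[OF vs.subspace_span] that by blast
  then have "lie_generated sc br (hh ` {..<n} \<union> ep ` {..<n} \<union> em ` {..<n}) \<subseteq> ?S"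
    unfolding lie_generated_def
    using hh_in_cartan generators_in_span by (intro Inter_lower) (auto intro: vs.span_base)
  then show ?thesis using chevalley_serre unfolding chevalley_serre_def by auto
qed

end

locale double_setting = chevalley_setting sc br n A d hh ep em B
  for sc :: "complex \<Rightarrow> 'g \<Rightarrow> 'g::ab_group_add" and br n A d hh ep em B +
  fixes u :: "nat \<Rightarrow> nat \<Rightarrow> complex"
    and brd :: "'g \<times> 'g \<Rightarrow> 'g \<times> 'g \<Rightarrow> 'g \<times> 'g" and Bd :: "'g \<times> 'g \<Rightarrow> 'g \<times> 'g \<Rightarrow> complex"
  assumes u_skew: "\<forall>i<n. \<forall>j<n. u i j = - u j i"
    and brd_bil: "bilinear_map_on sc (dset n sc hh) brd"
    and brd_alt: "\<forall>a\<in>dset n sc hh. brd a a = 0"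
    and brd_hh: "\<forall>H\<in>cartan n sc hh. \<forall>H'\<in>cartan n sc hh. brd (H, 0) (H', 0) = 0"
    and brd_hk: "\<forall>H\<in>cartan n sc hh. \<forall>H'\<in>cartan n sc hh. brd (H, 0) (0, H') = 0"
    and brd_kk: "\<forall>H\<in>cartan n sc hh. \<forall>H'\<in>cartan n sc hh. brd (0, H) (0, H') = 0"
    and brd_hx: "\<forall>H\<in>cartan n sc hh. \<forall>\<alpha> x. is_root n sc br hh \<alpha> \<and> x \<in> rootspace n sc br hh \<alpha> \<longrightarrow>
        brd (H, 0) (x, 0) = (sc (- (\<alpha> (PhiH n u sc B hh H) - \<alpha> H)) x, 0)"
    and brd_kx: "\<forall>H\<in>cartan n sc hh. \<forall>\<alpha> x. is_root n sc br hh \<alpha> \<and> x \<in> rootspace n sc br hh \<alpha> \<longrightarrow>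
        brd (0, H) (x, 0) = (sc (\<alpha> (PhiH n u sc B hh H) + \<alpha> H) x, 0)"
    and brd_xx: "\<forall>\<alpha> \<beta> x y. is_root n sc br hh \<alpha> \<and> x \<in> rootspace n sc br hh \<alpha>
        \<and> is_root n sc br hh \<beta> \<and> y \<in> rootspace n sc br hh \<beta> \<longrightarrow>
        brd (x, 0) (y, 0) = scd sc (1/2) ((br x y, 0) +
          (if (\<forall>h\<in>cartan n sc hh. \<alpha> h + \<beta> h = 0) then (0, br x y) else (br x y, 0)))"
    and Bd_bil: "bilinear_form_on sc (dset n sc hh) Bd"
    and Bd_hh: "\<forall>H\<in>cartan n sc hh. \<forall>H'\<in>cartan n sc hh. Bd (H, 0) (H', 0) = 2 * B H H'"
    and Bd_hx: "\<forall>H\<in>cartan n sc hh. \<forall>x\<in>nilp n sc br hh. Bd (H, 0) (x, 0) = 0 \<and> Bd (x, 0) (H, 0) = 0"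
    and Bd_xx: "\<forall>x\<in>nilp n sc br hh. \<forall>x'\<in>nilp n sc br hh. Bd (x, 0) (x', 0) = B x x'"
    and Bd_hk: "\<forall>H\<in>cartan n sc hh. \<forall>H'\<in>cartan n sc hh. Bd (H, 0) (0, H') = - 2 * uu n u B hh H H'"
    and Bd_kh: "\<forall>H\<in>cartan n sc hh. \<forall>H'\<in>cartan n sc hh. Bd (0, H') (H, 0) = 2 * uu n u B hh H' H"
    and Bd_kx: "\<forall>K\<in>cartan n sc hh. \<forall>x\<in>nilp n sc br hh. Bd (0, K) (x, 0) = 0 \<and> Bd (x, 0) (0, K) = 0"
    and Bd_kk: "\<forall>K\<in>cartan n sc hh. \<forall>K'\<in>cartan n sc hh. Bd (0, K) (0, K') = 2 * B K K'"
begin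

abbreviation "Ds \<equiv> dset n sc hh"
abbreviation "Ph \<equiv> PhiH n u sc B hh"
abbreviation "UU \<equiv> uu n u B hh"

lemma dset_add: "a \<in> Ds \<Longrightarrow> b \<in> Ds \<Longrightarrow> a + b \<in> Ds"
  unfolding dset_def by (auto intro: cartan_add)

lemma dset_h: "h \<in> Hc \<Longrightarrow> (h, 0) \<in> Ds"
  and dset_k: "h \<in> Hc \<Longrightarrow> (0, h) \<in> Ds"
  and dset_g: "(x, 0) \<in> Ds"
  unfolding dset_def using cartan_zero by auto

lemma brd_in_dset: "a \<in> Ds \<Longrightarrow> b \<in> Ds \<Longrightarrow> brd a b \<in> Ds"
  and brd_add_left: "a \<in> Ds \<Longrightarrow> b \<in> Ds \<Longrightarrow> c \<in> Ds \<Longrightarrow> brd (a + b) c = brd a c + brd b c"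
  and brd_add_right: "a \<in> Ds \<Longrightarrow> b \<in> Ds \<Longrightarrow> c \<in> Ds \<Longrightarrow> brd c (a + b) = brd c a + brd c b"
  using brd_bil unfolding bilinear_map_on_def by auto

lemma Bd_add_left: "a \<in> Ds \<Longrightarrow> b \<in> Ds \<Longrightarrow> c \<in> Ds \<Longrightarrow> Bd (a + b) c = Bd a c + Bd b c"
  and Bd_add_right: "a \<in> Ds \<Longrightarrow> b \<in> Ds \<Longrightarrow> c \<in> Ds \<Longrightarrow> Bd c (a + b) = Bd c a + Bd c b"
  and Bd_scale_left: "a \<in> Ds \<Longrightarrow> b \<in> Ds \<Longrightarrow> Bd (scd sc k b) a = k * Bd b a"
  and Bd_scale_right: "a \<in> Ds \<Longrightarrow> b \<in> Ds \<Longrightarrow> Bd a (scd sc k b) = k * Bd a b"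
  using Bd_bil unfolding bilinear_form_on_def by auto

lemma dset_zero: "0 \<in> Ds"
  using dset_g by (simp add: zero_prod_def)

lemma Bd_zero_left: "a \<in> Ds \<Longrightarrow> Bd 0 a = 0"
  and Bd_zero_right: "a \<in> Ds \<Longrightarrow> Bd a 0 = 0"
  using Bd_add_left[OF dset_zero dset_zero, of a] Bd_add_right[OF dset_zero dset_zero, of a] by simp_all

lemma brd_anticomm:
  assumes a: "a \<in> Ds" and b: "b \<in> Ds"
  shows "brd b a = - brd a b"
proof -
  have "brd (a + b) (a + b) = 0" using brd_alt dset_add[OF a b] by blast
  then have "brd a a + brd b a + (brd a b + brd b b) = 0"
    using a b dset_add[OF a b] by (simp add: brd_add_left brd_add_right)
  then have "brd b a + brd a b = 0" using brd_alt a b by simp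
  then show ?thesis by (simp add: eq_neg_iff_add_eq_0)
qed

lemma brd_root_vectors:
  assumes "isr \<alpha>" "x \<in> rs \<alpha>" "isr \<beta>" "y \<in> rs \<beta>" "h \<in> Hc" "\<alpha> h + \<beta> h \<noteq> 0"
  shows "brd (x, 0) (y, 0) = (br x y, 0)"
  using brd_xx assms by (auto simp: scd_def scale_half_double)

lemma brd_opposite_root_vectors:
  assumes "isr \<alpha>" "x \<in> rs \<alpha>" "isr \<beta>" "y \<in> rs \<beta>" "\<forall>h\<in>Hc. \<alpha> h + \<beta> h = 0"
  shows "brd (x, 0) (y, 0) = scd sc (1/2) ((br x y, 0) + (0, br x y))"
  using brd_xx assms by auto

lemma opposite_root_vectors_bracket:
  assumes "isr \<alpha>" "x \<in> rs \<alpha>" "isr \<beta>" "y \<in> rs \<beta>" "\<forall>h\<in>Hc. \<alpha> h + \<beta> h = 0"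
  shows "br x y \<in> Hc"
proof -
  have "brd (x, 0) (y, 0) \<in> Ds" using brd_in_dset dset_g by auto
  then have "sc (1/2) (br x y) \<in> Hc"
    using brd_opposite_root_vectors[OF assms] unfolding dset_def scd_def by simp
  then have "sc 2 (sc (1/2) (br x y)) \<in> Hc" by (rule cartan_scale)
  then show ?thesis by simp
qed

lemma Bd_bracket_opposite_left:
  assumes "isr \<alpha>" "x \<in> rs \<alpha>" "isr \<beta>" "y \<in> rs \<beta>" "\<forall>h\<in>Hc. \<alpha> h + \<beta> h = 0" and t: "t \<in> Ds"
  shows "Bd (brd (x, 0) (y, 0)) t = 1/2 * (Bd (br x y, 0) t + Bd (0, br x y) t)"
proof -
  have z: "br x y \<in> Hc" by (rule opposite_root_vectors_bracket[OF assms(1-5)])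
  have "Bd (brd (x, 0) (y, 0)) t = 1/2 * Bd ((br x y, 0) + (0, br x y)) t"
    unfolding brd_opposite_root_vectors[OF assms(1-5)]
    by (rule Bd_scale_left[OF t dset_add[OF dset_h[OF z] dset_k[OF z]]])
  then show ?thesis by (simp only: Bd_add_left[OF dset_h[OF z] dset_k[OF z] t])
qed

lemma Bd_bracket_opposite_right:
  assumes "isr \<alpha>" "x \<in> rs \<alpha>" "isr \<beta>" "y \<in> rs \<beta>" "\<forall>h\<in>Hc. \<alpha> h + \<beta> h = 0" and t: "t \<in> Ds"
  shows "Bd t (brd (x, 0) (y, 0)) = 1/2 * (Bd t (br x y, 0) + Bd t (0, br x y))"
proof -
  have z: "br x y \<in> Hc" by (rule opposite_root_vectors_bracket[OF assms(1-5)])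
  have "Bd t (brd (x, 0) (y, 0)) = 1/2 * Bd t ((br x y, 0) + (0, br x y))"
    unfolding brd_opposite_root_vectors[OF assms(1-5)]
    by (rule Bd_scale_right[OF t dset_add[OF dset_h[OF z] dset_k[OF z]]])
  then show ?thesis by (simp only: Bd_add_right[OF dset_h[OF z] dset_k[OF z] t])
qed

lemma Bd_root_vectors_scale:
  assumes "isr \<alpha>" "x \<in> rs \<alpha>" "isr \<beta>" "y \<in> rs \<beta>"
  shows "Bd (sc c x, 0) (y, 0) = c * B x y" "Bd (x, 0) (sc c y, 0) = c * B x y"
    "Bd (- sc c x, 0) (y, 0) = - c * B x y" "Bd (x, 0) (- sc c y, 0) = - c * B x y"
proof -
  have N: "sc c' x \<in> NN" "sc c' y \<in> NN" "x \<in> NN" "y \<in> NN" for c'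
    using root_vector_in_nilp[OF assms(1) rootspace_scale[OF assms(2)]]
      root_vector_in_nilp[OF assms(3) rootspace_scale[OF assms(4)]]
      root_vector_in_nilp[OF assms(1,2)] root_vector_in_nilp[OF assms(3,4)] by blast+
  have "Bd (sc c' x, 0) (y, 0) = c' * B x y" "Bd (x, 0) (sc c' y, 0) = c' * B x y" for c'
    using Bd_xx N by (simp_all add: B_scale_left B_scale_right)
  from this[of c] this[of "- c"] show "Bd (sc c x, 0) (y, 0) = c * B x y"
    "Bd (x, 0) (sc c y, 0) = c * B x y" "Bd (- sc c x, 0) (y, 0) = - c * B x y"
    "Bd (x, 0) (- sc c y, 0) = - c * B x y"
    by (simp_all add: vs.scale_minus_left)
qed

lemma span_cartan_root_vectors_UNIV: "vs.span (Hc \<union> root_vectors) = UNIV"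
  by (rule span_cartan_root_vectors[OF opposite_root_vectors_bracket])

lemma PhiH_in_cartan: "Ph h \<in> Hc"
  unfolding PhiH_def cartan_def by (intro vs.span_sum vs.span_scale vs.span_base) auto

lemma B_PhiH: "B z (Ph h) = UU h z"
  by (simp add: PhiH_def uu_def B_sum_right B_scale_right)

lemma uu_skew: "UU a b = - UU b a"
proof -
  have "UU b a = (\<Sum>j<n. \<Sum>i<n. u i j * B b (hh i) * B a (hh j))"
    unfolding uu_def by (rule sum.swap)
  also have "\<dots> = (\<Sum>j<n. \<Sum>i<n. - (u j i * B a (hh j) * B b (hh i)))"
  proof (intro sum.cong refl)
    fix i j assume "i \<in> {..<n}" "j \<in> {..<n}"
    then have "u i j = - u j i" using u_skew by blast
    then show "u i j * B b (hh i) * B a (hh j) = - (u j i * B a (hh j) * B b (hh i))"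
      by (simp add: algebra_simps)
  qed
  also have "\<dots> = - UU a b" by (simp only: uu_def sum_negf)
  finally show ?thesis by simp
qed

lemma uu_bracket_cartan:
  assumes y: "y \<in> rs \<beta>" and h: "h \<in> Hc"
  shows "UU (br x y) h = \<beta> (Ph h) * B x y"
proof -
  have "UU (br x y) h = - B (br x y) (Ph h)" by (simp add: uu_skew[of "br x y" h] B_PhiH)
  then show ?thesis using B_bracket_cartan[OF y PhiH_in_cartan] by simp
qed

definition toral_elements :: "('g \<times> 'g) set" where
  "toral_elements = {(h, 0) | h. h \<in> Hc} \<union> {(0, k) | k. k \<in> Hc}"

text \<open>Common behaviour of \<open>h\<close> and \<open>k\<^sub>\<lambda> = \<phi>(h\<^sub>\<lambda>)\<close>: \<open>t\<close> acts on the root space of \<open>\<alpha>\<close> by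
  the scalar \<open>\<theta> \<alpha>\<close>, is orthogonal to \<open>\<n>\<close>, and pairs with \<open>h + \<phi>(h)\<close> as \<open>2 L h\<close>;
  the last clause is exactly what invariance needs for two opposite root vectors.\<close>

definition toral_data :: "'g \<times> 'g \<Rightarrow> (('g \<Rightarrow> complex) \<Rightarrow> complex) \<Rightarrow> ('g \<Rightarrow> complex) \<Rightarrow> bool"
  where "toral_data t \<theta> L \<longleftrightarrow>
   (\<forall>\<alpha> x. isr \<alpha> \<and> x \<in> rs \<alpha> \<longrightarrow> brd t (x, 0) = (sc (\<theta> \<alpha>) x, 0))
 \<and> (\<forall>v\<in>NN. Bd t (v, 0) = 0 \<and> Bd (v, 0) t = 0)
 \<and> (\<forall>z\<in>Hc. Bd (z, 0) t + Bd (0, z) t = 2 * L z \<and> Bd t (z, 0) + Bd t (0, z) = 2 * L z)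
 \<and> (\<forall>\<alpha> \<beta> x y. isr \<alpha> \<and> isr \<beta> \<and> x \<in> rs \<alpha> \<and> y \<in> rs \<beta> \<and> (\<forall>h\<in>Hc. \<alpha> h + \<beta> h = 0)
       \<longrightarrow> \<theta> \<alpha> = - \<theta> \<beta> \<and> L (br x y) = - \<theta> \<beta> * B x y)"

lemma toral_dataD:
  assumes "toral_data t \<theta> L"
  shows "\<And>\<alpha> x. isr \<alpha> \<Longrightarrow> x \<in> rs \<alpha> \<Longrightarrow> brd t (x, 0) = (sc (\<theta> \<alpha>) x, 0)"
    and "\<And>v. v \<in> NN \<Longrightarrow> Bd t (v, 0) = 0"
    and "\<And>v. v \<in> NN \<Longrightarrow> Bd (v, 0) t = 0"
    and "\<And>z. z \<in> Hc \<Longrightarrow> Bd (z, 0) t + Bd (0, z) t = 2 * L z"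
    and "\<And>z. z \<in> Hc \<Longrightarrow> Bd t (z, 0) + Bd t (0, z) = 2 * L z"
    and "\<And>\<alpha> \<beta> x y. isr \<alpha> \<Longrightarrow> isr \<beta> \<Longrightarrow> x \<in> rs \<alpha> \<Longrightarrow> y \<in> rs \<beta> \<Longrightarrow>
      \<forall>h\<in>Hc. \<alpha> h + \<beta> h = 0 \<Longrightarrow> \<theta> \<alpha> = - \<theta> \<beta>"
    and "\<And>\<alpha> \<beta> x y. isr \<alpha> \<Longrightarrow> isr \<beta> \<Longrightarrow> x \<in> rs \<alpha> \<Longrightarrow> y \<in> rs \<beta> \<Longrightarrow>
      \<forall>h\<in>Hc. \<alpha> h + \<beta> h = 0 \<Longrightarrow> L (br x y) = - \<theta> \<beta> * B x y"
  using assms unfolding toral_data_def by blast+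

lemma toral_data_h:
  assumes h: "h \<in> Hc"
  shows "toral_data (h, 0) (\<lambda>\<alpha>. - (\<alpha> (Ph h) - \<alpha> h)) (\<lambda>z. B z h + UU z h)"
  unfolding toral_data_def
proof (intro conjI allI impI ballI)
  fix \<alpha> x assume "isr \<alpha> \<and> x \<in> rs \<alpha>"
  then show "brd (h, 0) (x, 0) = (sc (- (\<alpha> (Ph h) - \<alpha> h)) x, 0)" using brd_hx h by blast
next
  fix v assume "v \<in> NN"
  then show "Bd (h, 0) (v, 0) = 0" "Bd (v, 0) (h, 0) = 0" using Bd_hx h by auto
next
  fix z assume z: "z \<in> Hc"
  show "Bd (z, 0) (h, 0) + Bd (0, z) (h, 0) = 2 * (B z h + UU z h)"
    using Bd_hh Bd_kh h z by (simp add: algebra_simps)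
  show "Bd (h, 0) (z, 0) + Bd (h, 0) (0, z) = 2 * (B z h + UU z h)"
    using Bd_hh Bd_hk h z uu_skew[of h z] B_sym[of h z] by (simp add: algebra_simps)
next
  fix \<alpha> \<beta> x y
  assume a: "isr \<alpha> \<and> isr \<beta> \<and> x \<in> rs \<alpha> \<and> y \<in> rs \<beta> \<and> (\<forall>h\<in>Hc. \<alpha> h + \<beta> h = 0)"
  then have "\<alpha> h = - \<beta> h" "\<alpha> (Ph h) = - \<beta> (Ph h)"
    using h PhiH_in_cartan by (simp_all add: eq_neg_iff_add_eq_0)
  then show "- (\<alpha> (Ph h) - \<alpha> h) = - (- (\<beta> (Ph h) - \<beta> h))" by simp
  show "B (br x y) h + UU (br x y) h = - (- (\<beta> (Ph h) - \<beta> h)) * B x y"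
    using B_bracket_cartan[of y \<beta> h x] uu_bracket_cartan[of y \<beta> h x] a h
    by (simp add: algebra_simps)
qed

lemma toral_data_k:
  assumes h: "h \<in> Hc"
  shows "toral_data (0, h) (\<lambda>\<alpha>. \<alpha> (Ph h) + \<alpha> h) (\<lambda>z. B z h - UU z h)"
  unfolding toral_data_def
proof (intro conjI allI impI ballI)
  fix \<alpha> x assume "isr \<alpha> \<and> x \<in> rs \<alpha>"
  then show "brd (0, h) (x, 0) = (sc (\<alpha> (Ph h) + \<alpha> h) x, 0)" using brd_kx h by blast
next
  fix v assume "v \<in> NN"
  then show "Bd (0, h) (v, 0) = 0" "Bd (v, 0) (0, h) = 0" using Bd_kx h by auto
next
  fix z assume z: "z \<in> Hc"
  show "Bd (z, 0) (0, h) + Bd (0, z) (0, h) = 2 * (B z h - UU z h)"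
    using Bd_kk Bd_hk h z by (simp add: algebra_simps)
  show "Bd (0, h) (z, 0) + Bd (0, h) (0, z) = 2 * (B z h - UU z h)"
    using Bd_kk Bd_kh h z uu_skew[of h z] B_sym[of h z] by (simp add: algebra_simps)
next
  fix \<alpha> \<beta> x y
  assume a: "isr \<alpha> \<and> isr \<beta> \<and> x \<in> rs \<alpha> \<and> y \<in> rs \<beta> \<and> (\<forall>h\<in>Hc. \<alpha> h + \<beta> h = 0)"
  then have "\<alpha> h = - \<beta> h" "\<alpha> (Ph h) = - \<beta> (Ph h)"
    using h PhiH_in_cartan by (simp_all add: eq_neg_iff_add_eq_0)
  then show "\<alpha> (Ph h) + \<alpha> h = - (\<beta> (Ph h) + \<beta> h)" by simp
  show "B (br x y) h - UU (br x y) h = - (\<beta> (Ph h) + \<beta> h) * B x y"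
    using B_bracket_cartan[of y \<beta> h x] uu_bracket_cartan[of y \<beta> h x] a h
    by (simp add: algebra_simps)
qed

lemma toral_elements_data: "t \<in> toral_elements \<Longrightarrow> \<exists>\<theta> L. toral_data t \<theta> L"
  unfolding toral_elements_def using toral_data_h toral_data_k by blast

lemma toral_elements_dset: "t \<in> toral_elements \<Longrightarrow> t \<in> Ds"
  unfolding toral_elements_def using dset_h dset_k by auto

lemma toral_elements_cases:
  assumes "t \<in> toral_elements"
  obtains (h) h where "t = (h, 0)" "h \<in> Hc" | (k) k where "t = (0, k)" "k \<in> Hc"
  using assms unfolding toral_elements_def by blast

lemma brd_toral_elements:
  assumes t: "t \<in> toral_elements" and t': "t' \<in> toral_elements"
  shows "brd t t' = 0"
proof -
  have brd_kh: "brd (0, k) (h, 0) = 0" if "h \<in> Hc" "k \<in> Hc" for h k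
    using brd_anticomm[OF dset_h dset_k, of h k] brd_hk that by simp
  from t t' show ?thesis
    by (cases rule: toral_elements_cases; cases rule: toral_elements_cases[OF t'])
      (simp_all add: brd_hh brd_hk brd_kk brd_kh)
qed

lemma Bd_toral_elements_sym:
  assumes t: "t \<in> toral_elements" and t': "t' \<in> toral_elements"
  shows "Bd t t' = Bd t' t"
proof -
  have Bd_hk_sym: "Bd (h, 0) (0, k) = Bd (0, k) (h, 0)" if "h \<in> Hc" "k \<in> Hc" for h k
    using Bd_hk Bd_kh uu_skew[of k h] that by simp
  from t show ?thesis
    by (cases rule: toral_elements_cases; cases rule: toral_elements_cases[OF t'])
      (simp_all add: Bd_hh Bd_kk B_sym Bd_hk_sym)
qed

lemma brd_root_vector_toral:
  assumes t: "t \<in> toral_elements" and "toral_data t \<theta> L" "isr \<alpha>" "x \<in> rs \<alpha>"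
  shows "brd (x, 0) t = (sc (- \<theta> \<alpha>) x, 0)"
  using brd_anticomm[OF toral_elements_dset[OF t] dset_g] toral_dataD(1)[OF assms(2-4)] by simp

abbreviation "invariant_at a b c \<equiv> Bd (brd a b) c = Bd a (brd b c)"

lemma invariant_toral: "t \<in> toral_elements \<Longrightarrow> t' \<in> toral_elements \<Longrightarrow> t'' \<in> toral_elements
    \<Longrightarrow> invariant_at t t' t''"
  using brd_toral_elements toral_elements_dset Bd_zero_left Bd_zero_right by simp

lemma invariant_one_root_vector:
  assumes t: "t \<in> toral_elements" and t': "t' \<in> toral_elements" and x: "isr \<alpha>" "x \<in> rs \<alpha>"
  shows "invariant_at (x, 0) t t'" "invariant_at t (x, 0) t'" "invariant_at t t' (x, 0)"
proof -
  obtain \<theta> L where o: "toral_data t \<theta> L" using toral_elements_data[OF t] by blast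
  obtain \<theta>' L' where o': "toral_data t' \<theta>' L'" using toral_elements_data[OF t'] by blast
  have N: "sc c x \<in> NN" for c
    by (rule root_vector_in_nilp[OF x(1) rootspace_scale[OF x(2)]])
  have tt': "brd t t' = 0" by (rule brd_toral_elements[OF t t'])
  show "invariant_at (x, 0) t t'"
    unfolding brd_root_vector_toral[OF t o x] tt' toral_dataD(3)[OF o' N]
    by (rule Bd_zero_right[OF dset_g, symmetric])
  show "invariant_at t (x, 0) t'"
    unfolding toral_dataD(1)[OF o x] brd_root_vector_toral[OF t' o' x]
      toral_dataD(3)[OF o' N] toral_dataD(2)[OF o N] ..
  show "invariant_at t t' (x, 0)"
    unfolding tt' toral_dataD(1)[OF o' x] toral_dataD(2)[OF o N]
    by (rule Bd_zero_left[OF dset_g])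
qed

lemma bracket_nonopposite_in_nilp:
  assumes "x \<in> rs \<alpha>" "y \<in> rs \<beta>" "h \<in> Hc" "\<alpha> h + \<beta> h \<noteq> 0"
  shows "br x y \<in> NN"
  using rootspace_in_nilp[OF rootspace_bracket[OF assms(1,2)] assms(3,4)] .

lemma invariant_root_root_toral:
  assumes t: "t \<in> toral_elements" and x: "isr \<alpha>" "x \<in> rs \<alpha>" and y: "isr \<beta>" "y \<in> rs \<beta>"
  shows "invariant_at (x, 0) (y, 0) t"
proof -
  obtain \<theta> L where o: "toral_data t \<theta> L" using toral_elements_data[OF t] by blast
  have "Bd (x, 0) (brd (y, 0) t) = - \<theta> \<beta> * B x y"
    using brd_root_vector_toral[OF t o y] Bd_root_vectors_scale[OF x y] by simp
  moreover have "Bd (brd (x, 0) (y, 0)) t = - \<theta> \<beta> * B x y"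
  proof (cases "\<forall>h\<in>Hc. \<alpha> h + \<beta> h = 0")
    case True
    have z: "br x y \<in> Hc" by (rule opposite_root_vectors_bracket[OF x y True])
    show ?thesis
      using Bd_bracket_opposite_left[OF x y True toral_elements_dset[OF t]]
        toral_dataD(4)[OF o z] toral_dataD(7)[OF o x(1) y(1) x(2) y(2) True] by simp
  next
    case False
    then obtain h where h: "h \<in> Hc" "\<alpha> h + \<beta> h \<noteq> 0" by auto
    then show ?thesis
      using brd_root_vectors[OF x y h] toral_dataD(3)[OF o bracket_nonopposite_in_nilp[OF x(2) y(2) h]]
        B_rootspaces_orthogonal[OF x(2) y(2) h] by simp
  qed
  ultimately show ?thesis by simp
qed

lemma invariant_toral_root_root:
  assumes t: "t \<in> toral_elements" and x: "isr \<alpha>" "x \<in> rs \<alpha>" and y: "isr \<beta>" "y \<in> rs \<beta>"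
  shows "invariant_at t (x, 0) (y, 0)"
proof -
  obtain \<theta> L where o: "toral_data t \<theta> L" using toral_elements_data[OF t] by blast
  have "Bd (brd t (x, 0)) (y, 0) = \<theta> \<alpha> * B x y"
    using toral_dataD(1)[OF o x] Bd_root_vectors_scale[OF x y] by simp
  moreover have "Bd t (brd (x, 0) (y, 0)) = \<theta> \<alpha> * B x y"
  proof (cases "\<forall>h\<in>Hc. \<alpha> h + \<beta> h = 0")
    case True
    have z: "br x y \<in> Hc" by (rule opposite_root_vectors_bracket[OF x y True])
    show ?thesis
      using Bd_bracket_opposite_right[OF x y True toral_elements_dset[OF t]] toral_dataD(5)[OF o z]
        toral_dataD(6,7)[OF o x(1) y(1) x(2) y(2) True] by simp
  next
    case False
    then obtain h where h: "h \<in> Hc" "\<alpha> h + \<beta> h \<noteq> 0" by auto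
    then show ?thesis
      using brd_root_vectors[OF x y h] toral_dataD(2)[OF o bracket_nonopposite_in_nilp[OF x(2) y(2) h]]
        B_rootspaces_orthogonal[OF x(2) y(2) h] by simp
  qed
  ultimately show ?thesis by simp
qed

lemma invariant_root_toral_root:
  assumes t: "t \<in> toral_elements" and x: "isr \<alpha>" "x \<in> rs \<alpha>" and y: "isr \<beta>" "y \<in> rs \<beta>"
  shows "invariant_at (x, 0) t (y, 0)"
proof -
  obtain \<theta> L where o: "toral_data t \<theta> L" using toral_elements_data[OF t] by blast
  have key: "\<theta> \<alpha> * B x y = - (\<theta> \<beta> * B x y)"
  proof (cases "\<forall>h\<in>Hc. \<alpha> h + \<beta> h = 0")
    case True
    then show ?thesis using toral_dataD(6)[OF o x(1) y(1) x(2) y(2)] by simp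
  next
    case False
    then obtain h where "h \<in> Hc" "\<alpha> h + \<beta> h \<noteq> 0" by auto
    then show ?thesis using B_rootspaces_orthogonal[OF x(2) y(2)] by simp
  qed
  have "Bd (brd (x, 0) t) (y, 0) = - (\<theta> \<alpha> * B x y)"
    using brd_root_vector_toral[OF t o x] Bd_root_vectors_scale[OF x y] by simp
  also have "\<dots> = \<theta> \<beta> * B x y" by (simp only: key minus_minus)
  also have "\<dots> = Bd (x, 0) (brd t (y, 0))"
    using toral_dataD(1)[OF o y] Bd_root_vectors_scale[OF x y] by simp
  finally show ?thesis .
qed

lemma Bd_bracket_root_vectors:
  assumes x: "isr \<alpha>" "x \<in> rs \<alpha>" and y: "isr \<beta>" "y \<in> rs \<beta>" and w: "isr \<gamma>" "w \<in> rs \<gamma>"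
  shows "Bd (brd (x, 0) (y, 0)) (w, 0) = B (br x y) w" "Bd (w, 0) (brd (x, 0) (y, 0)) = B w (br x y)"
proof -
  have wN: "w \<in> NN" by (rule root_vector_in_nilp[OF w])
  have "Bd (brd (x, 0) (y, 0)) (w, 0) = B (br x y) w \<and> Bd (w, 0) (brd (x, 0) (y, 0)) = B w (br x y)"
  proof (cases "\<forall>h\<in>Hc. \<alpha> h + \<beta> h = 0")
    case True
    have z: "br x y \<in> Hc" by (rule opposite_root_vectors_bracket[OF x y True])
    have "B (br x y) w = 0" by (rule B_cartan_root_vector[OF z w])
    then show ?thesis
      using Bd_bracket_opposite_left[OF x y True dset_g[of w]]
        Bd_bracket_opposite_right[OF x y True dset_g[of w]] Bd_hx Bd_kx z wN B_sym[of w] by simp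
  next
    case False
    then obtain h where h: "h \<in> Hc" "\<alpha> h + \<beta> h \<noteq> 0" by auto
    then show ?thesis
      using brd_root_vectors[OF x y h] bracket_nonopposite_in_nilp[OF x(2) y(2) h] Bd_xx wN by simp
  qed
  then show "Bd (brd (x, 0) (y, 0)) (w, 0) = B (br x y) w" "Bd (w, 0) (brd (x, 0) (y, 0)) = B w (br x y)"
    by auto
qed

lemma invariant_root_vectors:
  assumes x: "isr \<alpha>" "x \<in> rs \<alpha>" and y: "isr \<beta>" "y \<in> rs \<beta>" and w: "isr \<gamma>" "w \<in> rs \<gamma>"
  shows "invariant_at (x, 0) (y, 0) (w, 0)"
  using Bd_bracket_root_vectors(1)[OF x y w] Bd_bracket_root_vectors(2)[OF y w x] B_invariant by simp

definition dgens :: "('g \<times> 'g) set" where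
  "dgens = toral_elements \<union> {(x, 0) | x. x \<in> root_vectors}"

lemma dgens_cases:
  assumes "a \<in> dgens"
  obtains (toral) "a \<in> toral_elements" | (root) x \<alpha> where "a = (x, 0)" "isr \<alpha>" "x \<in> rs \<alpha>"
  using assms unfolding dgens_def root_vectors_def by blast

lemma dgens_dset: "a \<in> dgens \<Longrightarrow> a \<in> Ds"
  by (elim dgens_cases) (simp_all add: toral_elements_dset dset_g)

lemma Bd_sym_dgens:
  assumes a: "a \<in> dgens" and b: "b \<in> dgens"
  shows "Bd a b = Bd b a"
proof -
  have toral_root: "Bd t (x, 0) = Bd (x, 0) t"
    if t: "t \<in> toral_elements" and x: "isr \<alpha>" "x \<in> rs \<alpha>" for t x \<alpha>
  proof -
    obtain \<theta> L where "toral_data t \<theta> L" using toral_elements_data[OF t] by blast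
    then show ?thesis using toral_dataD(2,3) root_vector_in_nilp[OF x] by simp
  qed
  show ?thesis
    using a
  proof (cases rule: dgens_cases)
    case toral
    show ?thesis
      using b by (cases rule: dgens_cases) (use toral Bd_toral_elements_sym toral_root in auto)
  next
    case (root x \<alpha>)
    show ?thesis
      using b
    proof (cases rule: dgens_cases)
      case toral
      then show ?thesis using root toral_root by metis
    next
      case (root y \<beta>)
      then show ?thesis
        using \<open>a = (x, 0)\<close> \<open>isr \<alpha>\<close> \<open>x \<in> rs \<alpha>\<close> Bd_xx root_vector_in_nilp B_sym by metis
    qed
  qed
qed

lemma invariant_dgens:
  assumes a: "a \<in> dgens" and b: "b \<in> dgens" and c: "c \<in> dgens"
  shows "invariant_at a b c"
  using a b c
  by (elim dgens_cases)
    (blast intro: invariant_toral invariant_one_root_vector invariant_root_root_toral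
      invariant_toral_root_root invariant_root_toral_root invariant_root_vectors)+

lemma sums_of_dgens: "sums_of dgens = Ds"
proof
  show "sums_of dgens \<subseteq> Ds"
  proof
    fix a assume "a \<in> sums_of dgens"
    then show "a \<in> Ds"
      by induction (auto intro: dset_zero dgens_dset dset_add)
  qed
next
  have g: "(x, 0) \<in> sums_of dgens" for x
  proof -
    have "x \<in> vs.span (Hc \<union> root_vectors)" using span_cartan_root_vectors_UNIV by simp
    then show ?thesis
    proof (induction rule: vs.span_induct_alt)
      case base
      then show ?case using sums_of.zero[of dgens] by (simp add: zero_prod_def)
    next
      case (step c g y)
      have "(sc c g, 0) \<in> dgens"
        using cartan_root_vectors_scale[OF step(1)] unfolding dgens_def toral_elements_def by auto
      then have "(sc c g, 0) + (y, 0) \<in> sums_of dgens" using sums_of.gen sums_of.add step(2) by blast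
      then show ?case by simp
    qed
  qed
  show "Ds \<subseteq> sums_of dgens"
  proof
    fix p assume "p \<in> Ds"
    then obtain x k where p: "p = (x, k)" "k \<in> Hc" unfolding dset_def by (cases p) auto
    then have "(0, k) \<in> dgens" unfolding dgens_def toral_elements_def by auto
    then have "(x, 0) + (0, k) \<in> sums_of dgens" using g sums_of.gen sums_of.add by blast
    then show "p \<in> sums_of dgens" using p by simp
  qed
qed

lemmas additive_eq_on_dset = additive_eq_on_sums_of[where T = dgens, unfolded sums_of_dgens]

lemma Bd_symmetric:
  assumes a: "a \<in> Ds" and b: "b \<in> Ds"
  shows "Bd a b = Bd b a"
proof -
  have gen: "Bd a t = Bd t a" if "a \<in> Ds" "t \<in> dgens" for a t
    by (rule additive_eq_on_dset[OF _ _ _ that(1)])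
      (use that dgens_dset Bd_sym_dgens in \<open>simp_all add: Bd_add_left Bd_add_right\<close>)
  show ?thesis
    by (rule additive_eq_on_dset[OF _ _ _ b]) (use a gen in \<open>simp_all add: Bd_add_left Bd_add_right\<close>)
qed

lemma Bd_invariant:
  assumes a: "a \<in> Ds" and b: "b \<in> Ds" and c: "c \<in> Ds"
  shows "invariant_at a b c"
proof -
  have dgens1: "invariant_at a s t" if "a \<in> Ds" "s \<in> dgens" "t \<in> dgens" for a s t
    by (rule additive_eq_on_dset[OF _ _ _ that(1)])
      (use that dgens_dset invariant_dgens in
        \<open>simp_all add: brd_add_left Bd_add_left brd_in_dset\<close>)
  have dgens2: "invariant_at a b t" if "a \<in> Ds" "b \<in> Ds" "t \<in> dgens" for a b t
    by (rule additive_eq_on_dset[OF _ _ _ that(2)])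
      (use that dgens_dset dgens1 in
        \<open>simp_all add: brd_add_left brd_add_right Bd_add_left Bd_add_right brd_in_dset\<close>)
  show ?thesis
    by (rule additive_eq_on_dset[OF _ _ _ c])
      (use a b dgens_dset dgens2 in \<open>simp_all add: brd_add_right Bd_add_right brd_in_dset\<close>)
qed

end

theorem mainTheorem2:
  fixes n :: nat and A :: "nat \<Rightarrow> nat \<Rightarrow> int" and d :: "nat \<Rightarrow> nat"
    and u :: "nat \<Rightarrow> nat \<Rightarrow> complex"
    and sc :: "complex \<Rightarrow> 'g \<Rightarrow> 'g::ab_group_add" and br :: "'g \<Rightarrow> 'g \<Rightarrow> 'g"
    and hh ep em :: "nat \<Rightarrow> 'g" and B :: "'g \<Rightarrow> 'g \<Rightarrow> complex"
    and brd :: "'g \<times> 'g \<Rightarrow> 'g \<times> 'g \<Rightarrow> 'g \<times> 'g"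
    and Bd :: "'g \<times> 'g \<Rightarrow> 'g \<times> 'g \<Rightarrow> complex"
  assumes C: "gcm n A" "indecomposable n A" "symmetrizer_pd n A d"
    and u_skew: "\<forall>i<n. \<forall>j<n. u i j = - u j i"
    and g: "lie_algebra sc br" "chevalley_serre n A sc br hh ep em"
    and B: "invariant_form n A d sc br hh ep em B"
    and brd_bil: "bilinear_map_on sc (dset n sc hh) brd"
    and brd_alt: "\<forall>a\<in>dset n sc hh. brd a a = 0"
    and brd_hh: "\<forall>H\<in>cartan n sc hh. \<forall>H'\<in>cartan n sc hh. brd (H, 0) (H', 0) = 0"
    and brd_hk: "\<forall>H\<in>cartan n sc hh. \<forall>H'\<in>cartan n sc hh. brd (H, 0) (0, H') = 0"
    and brd_kk: "\<forall>H\<in>cartan n sc hh. \<forall>H'\<in>cartan n sc hh. brd (0, H) (0, H') = 0"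
    and brd_hx: "\<forall>H\<in>cartan n sc hh. \<forall>\<alpha> x. is_root n sc br hh \<alpha> \<and> x \<in> rootspace n sc br hh \<alpha> \<longrightarrow>
        brd (H, 0) (x, 0) = (sc (- (\<alpha> (PhiH n u sc B hh H) - \<alpha> H)) x, 0)"
    and brd_kx: "\<forall>H\<in>cartan n sc hh. \<forall>\<alpha> x. is_root n sc br hh \<alpha> \<and> x \<in> rootspace n sc br hh \<alpha> \<longrightarrow>
        brd (0, H) (x, 0) = (sc (\<alpha> (PhiH n u sc B hh H) + \<alpha> H) x, 0)"
    and brd_xx: "\<forall>\<alpha> \<beta> x y. is_root n sc br hh \<alpha> \<and> x \<in> rootspace n sc br hh \<alpha>
        \<and> is_root n sc br hh \<beta> \<and> y \<in> rootspace n sc br hh \<beta> \<longrightarrow>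
        brd (x, 0) (y, 0) = scd sc (1/2) ((br x y, 0) +
          (if (\<forall>h\<in>cartan n sc hh. \<alpha> h + \<beta> h = 0) then (0, br x y) else (br x y, 0)))"
    and Bd_bil: "bilinear_form_on sc (dset n sc hh) Bd"
    and Bd_hh: "\<forall>H\<in>cartan n sc hh. \<forall>H'\<in>cartan n sc hh. Bd (H, 0) (H', 0) = 2 * B H H'"
    and Bd_hx: "\<forall>H\<in>cartan n sc hh. \<forall>x\<in>nilp n sc br hh. Bd (H, 0) (x, 0) = 0 \<and> Bd (x, 0) (H, 0) = 0"
    and Bd_xx: "\<forall>x\<in>nilp n sc br hh. \<forall>x'\<in>nilp n sc br hh. Bd (x, 0) (x', 0) = B x x'"
    and Bd_hk: "\<forall>H\<in>cartan n sc hh. \<forall>H'\<in>cartan n sc hh. Bd (H, 0) (0, H') = - 2 * uu n u B hh H H'"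
    and Bd_kh: "\<forall>H\<in>cartan n sc hh. \<forall>H'\<in>cartan n sc hh. Bd (0, H') (H, 0) = 2 * uu n u B hh H' H"
    and Bd_kx: "\<forall>K\<in>cartan n sc hh. \<forall>x\<in>nilp n sc br hh. Bd (0, K) (x, 0) = 0 \<and> Bd (x, 0) (0, K) = 0"
    and Bd_kk: "\<forall>K\<in>cartan n sc hh. \<forall>K'\<in>cartan n sc hh. Bd (0, K) (0, K') = 2 * B K K'"
  shows "(\<forall>a\<in>dset n sc hh. \<forall>b\<in>dset n sc hh. Bd a b = Bd b a)
    \<and> (\<forall>a\<in>dset n sc hh. \<forall>b\<in>dset n sc hh. \<forall>c\<in>dset n sc hh. Bd (brd a b) c = Bd a (brd b c))"
proof -
  interpret double_setting sc br n A d hh ep em B u brd Bd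
    unfolding double_setting_def double_setting_axioms_def chevalley_setting_def
      chevalley_setting_axioms_def complex_lie_algebra_def
    by (intro conjI) (fact assms)+
  show ?thesis
    by (intro conjI ballI Bd_symmetric Bd_invariant)
qed

end
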